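(* Let $M\ge 1$ and $0<p_1<p_2<\cdots<p_M$ be real numbers. For arbitrary real constants $c_1,\ldots,c_M$ define, for $(x,t)\in\mathbb{R}^2$, \[ \tau(x,t)=\sum_{A\in\{-1,1\}^M} e^{\Theta_A},\qquad \Theta_A=\sum_{j=1}^M \alpha_j\,\theta_j+\log\Delta_A, \] where $A=(\alpha_1,\ldots,\alpha_M)$, $\theta_j=p_j\,(x+p_j^2\,t+c_j)$, and $\Delta_A=\big|\prod_{1\le j<k\le M}(\alpha_k p_k-\alpha_j p_j)\big|$ (the absolute value of the Vandermonde determinant of $\alpha_1p_1,\ldots,\alpha_Mp_M$). Then $2(\log\tau)_{xx}=2(\log\tau_H)_{xx}$, where $\tau_H$ is the Hirota $\tau$-function \[ \tau_H=\sum_{\mu_1,\ldots,\mu_M=0,1}\exp\Big(\sum_{j=1}^M\mu_j\eta_j+\sum_{1\le j<k\le M}b_{jk}\,\mu_j\mu_k\Big), \] with $\eta_j=2p_j\,(x+p_j^2\,t+\tilde c_j)$, $b_{jk}=\log\big[(p_k-p_j)^2/(p_k+p_j)^2\big]$, and $\tilde c_j=c_j+\frac{1}{2p_j}\log\Big|\prod_{k\neq j}\frac{p_k+p_j}{p_k-p_j}\Big|$. Consequently, $u=2(\log\tau)_{xx}$, as $c_1,\ldots,c_M$ range over $\mathbb{R}$, gives exactly the $M$-soliton solutions $u=2(\log\tau_H)_{xx}$ (with arbitrary real $\tilde c_1,\ldots,\tilde c_M$) of the KdV equation $4u_t=u_{xxx}+6uu_x$.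
   Context: Subscripts denote partial derivatives. The $M$-soliton solution of the KdV equation $4u_t=u_{xxx}+6uu_x$ with parameters $0<p_1<\cdots<p_M$ and arbitrary real constants $\tilde c_j$ is $u=2(\log\tau_H)_{xx}$ with $\tau_H$ as given in the claim. *)

theory Defs
  imports "HOL-Analysis.Analysis"
begin

text \<open>Indices j = 0,...,M-1 (0-based). Sign vectors A in {-1,1}^M are
extensional functions in PiE {..<M} (\<lambda>_. {-1,1}).\<close>

definition pairsM :: "nat \<Rightarrow> (nat \<times> nat) set" where
  "pairsM M = {(j, k). j < k \<and> k < M}"

definition DeltaA :: "nat \<Rightarrow> (nat \<Rightarrow> real) \<Rightarrow> (nat \<Rightarrow> real) \<Rightarrow> real" where
  "DeltaA M p A = \<bar>\<Prod>(j, k)\<in>pairsM M. (A k * p k - A j * p j)\<bar>"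

definition ThetaA :: "nat \<Rightarrow> (nat \<Rightarrow> real) \<Rightarrow> (nat \<Rightarrow> real) \<Rightarrow> (nat \<Rightarrow> real) \<Rightarrow> real \<Rightarrow> real \<Rightarrow> real" where
  "ThetaA M p c A x t = (\<Sum>j<M. A j * (p j * (x + (p j)\<^sup>2 * t + c j))) + ln (DeltaA M p A)"

definition tau :: "nat \<Rightarrow> (nat \<Rightarrow> real) \<Rightarrow> (nat \<Rightarrow> real) \<Rightarrow> real \<Rightarrow> real \<Rightarrow> real" where
  "tau M p c x t = (\<Sum>A\<in>PiE {..<M} (\<lambda>_. {-1, 1}). exp (ThetaA M p c A x t))"

definition b_coef :: "(nat \<Rightarrow> real) \<Rightarrow> nat \<Rightarrow> nat \<Rightarrow> real" where
  "b_coef p j k = ln ((p k - p j)\<^sup>2 / (p k + p j)\<^sup>2)"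

definition tauH :: "nat \<Rightarrow> (nat \<Rightarrow> real) \<Rightarrow> (nat \<Rightarrow> real) \<Rightarrow> real \<Rightarrow> real \<Rightarrow> real" where
  "tauH M p ct x t = (\<Sum>\<mu>\<in>PiE {..<M} (\<lambda>_. {0, 1}).
      exp ((\<Sum>j<M. \<mu> j * (2 * p j * (x + (p j)\<^sup>2 * t + ct j)))
           + (\<Sum>(j, k)\<in>pairsM M. b_coef p j k * \<mu> j * \<mu> k)))"

definition ctilde :: "nat \<Rightarrow> (nat \<Rightarrow> real) \<Rightarrow> (nat \<Rightarrow> real) \<Rightarrow> nat \<Rightarrow> real" where
  "ctilde M p c j = c j + 1 / (2 * p j) *
      ln \<bar>\<Prod>k\<in>{..<M} - {j}. (p k + p j) / (p k - p j)\<bar>"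

definition uxx :: "(real \<Rightarrow> real \<Rightarrow> real) \<Rightarrow> real \<Rightarrow> real \<Rightarrow> real" where
  "uxx F x t = 2 * deriv (\<lambda>y. deriv (\<lambda>z. ln (F z t)) y) x"

end

theory Submission
  imports Defs
begin

(* Put alpha = 2 mu - 1 with mu in {0,1}^M. For j < k the factor |alpha_k p_k - alpha_j p_j| of
   Delta_A is (p_k - p_j) * r_jk^(mu_j + mu_k) * exp (b_jk mu_j mu_k) with r_jk = (p_k + p_j)/(p_k - p_j).
   Collecting the powers of r_jk index by index gives exactly the shifts c~_j, so
   tau = V * exp (- sum_j theta_j) * tau_H, where V = prod_{j<k} (p_k - p_j) > 0. The prefactor is the
   exponential of a function affine in x and drops out of (log tau)_xx. Finally c |-> c~ is a
   translation, hence onto. *)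

lemma finite_pairsM: "finite (pairsM M)"
  by (rule finite_subset[of _ "{..<M} \<times> {..<M}"]) (auto simp: pairsM_def)

lemma sum_off_diagonal_eq_sum_pairsM:
  fixes f :: "nat \<Rightarrow> nat \<Rightarrow> 'a::comm_monoid_add"
  shows "(\<Sum>j<M. \<Sum>k\<in>{..<M} - {j}. f j k) = (\<Sum>(j, k)\<in>pairsM M. f j k + f k j)"
proof -
  have "(\<Sum>j<M. \<Sum>k\<in>{..<M} - {j}. f j k) = (\<Sum>(j, k)\<in>Sigma {..<M} (\<lambda>j. {..<M} - {j}). f j k)"
    by (rule sum.Sigma) auto
  also have "Sigma {..<M} (\<lambda>j. {..<M} - {j}) = pairsM M \<union> prod.swap ` pairsM M"
    by (auto simp: pairsM_def image_iff)
  also have "(\<Sum>(j, k)\<in>pairsM M \<union> prod.swap ` pairsM M. f j k) =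
      (\<Sum>(j, k)\<in>pairsM M. f j k) + (\<Sum>(j, k)\<in>prod.swap ` pairsM M. f j k)"
    by (rule sum.union_disjoint) (use finite_pairsM in \<open>auto simp: pairsM_def\<close>)
  also have "(\<Sum>(j, k)\<in>prod.swap ` pairsM M. f j k) = (\<Sum>(j, k)\<in>pairsM M. f k j)"
    by (subst sum.reindex) (auto simp: case_prod_unfold)
  finally show ?thesis
    by (simp add: sum.distrib case_prod_unfold)
qed

lemma abs_signed_diff_factor:
  fixes a b m n :: real
  assumes "0 < a" "a < b" "m \<in> {0, 1}" "n \<in> {0, 1}"
  shows "\<bar>(2 * n - 1) * b - (2 * m - 1) * a\<bar> =
    (b - a) * exp ((m + n) * ln ((b + a) / (b - a)) + m * n * ln ((b - a)\<^sup>2 / (b + a)\<^sup>2))"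
proof -
  have r: "exp (ln ((b + a) / (b - a))) = (b + a) / (b - a)"
    and s: "exp (ln ((b - a)\<^sup>2 / (b + a)\<^sup>2)) = (b - a)\<^sup>2 / (b + a)\<^sup>2"
    using assms(1,2) by simp_all
  have "exp (2 * ln ((b + a) / (b - a)) + ln ((b - a)\<^sup>2 / (b + a)\<^sup>2)) = 1"
    unfolding exp_add mult_2 r s using assms(1,2) by (simp add: power2_eq_square)
  then show ?thesis
    using assms by (auto simp: r field_simps)
qed

locale soliton_speeds =
  fixes M :: nat and p :: "nat \<Rightarrow> real"
  assumes pos: "\<And>j. j < M \<Longrightarrow> 0 < p j"
    and strict_mono: "\<And>j k. j < k \<Longrightarrow> k < M \<Longrightarrow> p j < p k"
begin

lemma pairsM_speeds:
  assumes "(j, k) \<in> pairsM M"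
  shows "0 < p j" "p j < p k"
  using assms pos strict_mono by (auto simp: pairsM_def)

lemma vandermonde_pos: "0 < (\<Prod>(j, k)\<in>pairsM M. p k - p j)"
  by (rule prod_pos) (auto dest: pairsM_speeds)

lemma DeltaA_sign_vector:
  assumes \<mu>: "\<mu> \<in> PiE {..<M} (\<lambda>_. {0, 1})"
  shows "DeltaA M p (\<lambda>j\<in>{..<M}. 2 * \<mu> j - 1) = (\<Prod>(j, k)\<in>pairsM M. p k - p j) *
    exp (\<Sum>(j, k)\<in>pairsM M. (\<mu> j + \<mu> k) * ln ((p k + p j) / (p k - p j)) + b_coef p j k * \<mu> j * \<mu> k)"
proof -
  have "\<bar>(\<lambda>j\<in>{..<M}. 2 * \<mu> j - 1) k * p k - (\<lambda>j\<in>{..<M}. 2 * \<mu> j - 1) j * p j\<bar> =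
      (p k - p j) * exp ((\<mu> j + \<mu> k) * ln ((p k + p j) / (p k - p j)) + b_coef p j k * \<mu> j * \<mu> k)"
    if jk: "(j, k) \<in> pairsM M" for j k
  proof -
    have "j < M" "k < M" using jk by (auto simp: pairsM_def)
    then show ?thesis
      using abs_signed_diff_factor[OF pairsM_speeds[OF jk], of "\<mu> j" "\<mu> k"] \<mu>
      by (auto simp: b_coef_def PiE_iff mult_ac)
  qed
  then show ?thesis
    unfolding DeltaA_def abs_prod exp_sum[OF finite_pairsM]
    by (simp add: case_prod_unfold prod.distrib[symmetric] cong: prod.cong)
qed

lemma sum_pairsM_ln_ratio:
  "(\<Sum>(j, k)\<in>pairsM M. (\<mu> j + \<mu> k) * ln ((p k + p j) / (p k - p j))) =
   (\<Sum>j<M. \<mu> j * ln \<bar>\<Prod>k\<in>{..<M} - {j}. (p k + p j) / (p k - p j)\<bar>)"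
proof -
  have ratio_nonzero: "(p k + p j) / (p k - p j) \<noteq> 0" if "j < M" "k \<in> {..<M} - {j}" for j k
  proof -
    have "p k \<noteq> p j"
      using that strict_mono[of j k] strict_mono[of k j] by (cases "j < k") auto
    then show ?thesis
      using that pos[of j] pos[of k] by simp
  qed
  have "(\<Sum>j<M. \<mu> j * ln \<bar>\<Prod>k\<in>{..<M} - {j}. (p k + p j) / (p k - p j)\<bar>) =
      (\<Sum>j<M. \<Sum>k\<in>{..<M} - {j}. \<mu> j * ln \<bar>(p k + p j) / (p k - p j)\<bar>)"
    unfolding abs_prod sum_distrib_left[symmetric]
    by (intro sum.cong refl arg_cong2[where f = "(*)"] ln_prod) (auto dest: ratio_nonzero)
  also have "\<dots> = (\<Sum>(j, k)\<in>pairsM M. (\<mu> j + \<mu> k) * ln ((p k + p j) / (p k - p j)))"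
    unfolding sum_off_diagonal_eq_sum_pairsM
  proof (intro sum.cong refl, clarify)
    fix j k assume "(j, k) \<in> pairsM M"
    from pairsM_speeds[OF this] have "\<bar>(p k + p j) / (p k - p j)\<bar> = (p k + p j) / (p k - p j)"
      and "\<bar>(p j + p k) / (p j - p k)\<bar> = (p k + p j) / (p k - p j)"
      by (auto simp: abs_div add.commute)
    then show "\<mu> j * ln \<bar>(p k + p j) / (p k - p j)\<bar> + \<mu> k * ln \<bar>(p j + p k) / (p j - p k)\<bar> =
        (\<mu> j + \<mu> k) * ln ((p k + p j) / (p k - p j))"
      by (simp add: algebra_simps)
  qed
  finally show ?thesis ..
qed

lemma ThetaA_sign_vector:
  assumes \<mu>: "\<mu> \<in> PiE {..<M} (\<lambda>_. {0, 1})"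
  shows "ThetaA M p c (\<lambda>j\<in>{..<M}. 2 * \<mu> j - 1) x t =
    ln (\<Prod>(j, k)\<in>pairsM M. p k - p j) - (\<Sum>j<M. p j * (x + (p j)\<^sup>2 * t + c j)) +
    ((\<Sum>j<M. \<mu> j * (2 * p j * (x + (p j)\<^sup>2 * t + ctilde M p c j)))
      + (\<Sum>(j, k)\<in>pairsM M. b_coef p j k * \<mu> j * \<mu> k))"
proof -
  define \<theta> where "\<theta> j = p j * (x + (p j)\<^sup>2 * t + c j)" for j
  define \<gamma> where "\<gamma> j = ln \<bar>\<Prod>k\<in>{..<M} - {j}. (p k + p j) / (p k - p j)\<bar>" for j
  have hirota_phase: "\<mu> j * (2 * p j * (x + (p j)\<^sup>2 * t + ctilde M p c j)) = 2 * \<mu> j * \<theta> j + \<mu> j * \<gamma> j"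
    if "j \<in> {..<M}" for j
    using pos[of j] that by (simp add: ctilde_def \<theta>_def \<gamma>_def field_simps)
  have ln_Delta: "ln (DeltaA M p (\<lambda>j\<in>{..<M}. 2 * \<mu> j - 1)) = ln (\<Prod>(j, k)\<in>pairsM M. p k - p j) +
      ((\<Sum>j<M. \<mu> j * \<gamma> j) + (\<Sum>(j, k)\<in>pairsM M. b_coef p j k * \<mu> j * \<mu> k))"
    unfolding DeltaA_sign_vector[OF \<mu>] \<gamma>_def sum_pairsM_ln_ratio[symmetric] sum.distrib[symmetric]
    using vandermonde_pos by (simp add: ln_mult case_prod_unfold)
  have "(\<Sum>j<M. (\<lambda>j\<in>{..<M}. 2 * \<mu> j - 1) j * \<theta> j) = (\<Sum>j<M. 2 * \<mu> j * \<theta> j - \<theta> j)"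
    by (rule sum.cong) (auto simp: algebra_simps)
  moreover have "(\<Sum>j<M. \<mu> j * (2 * p j * (x + (p j)\<^sup>2 * t + ctilde M p c j))) =
      (\<Sum>j<M. 2 * \<mu> j * \<theta> j + \<mu> j * \<gamma> j)"
    by (rule sum.cong) (simp_all add: hirota_phase)
  ultimately show ?thesis
    unfolding ThetaA_def \<theta>_def[symmetric] ln_Delta by (simp add: sum.distrib sum_subtractf)
qed

lemma tau_eq_scaled_tauH:
  "tau M p c x t = (\<Prod>(j, k)\<in>pairsM M. p k - p j) *
    exp (- (\<Sum>j<M. p j * (x + (p j)\<^sup>2 * t + c j))) * tauH M p (ctilde M p c) x t"
proof -
  let ?sign = "\<lambda>\<mu> :: nat \<Rightarrow> real. \<lambda>j\<in>{..<M}. 2 * \<mu> j - 1"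
  have bij: "bij_betw ?sign (PiE {..<M} (\<lambda>_. {0, 1})) (PiE {..<M} (\<lambda>_. {-1, 1}))"
  proof (rule bij_betw_byWitness[where f' = "\<lambda>A. \<lambda>j\<in>{..<M}. (A j + 1) / 2"])
  qed (auto simp: fun_eq_iff PiE_def Pi_def extensional_def field_simps)
  have "tau M p c x t = (\<Sum>\<mu>\<in>PiE {..<M} (\<lambda>_. {0, 1}). exp (ThetaA M p c (?sign \<mu>) x t))"
    unfolding tau_def by (rule sum.reindex_bij_betw[OF bij, symmetric])
  also have "\<dots> = (\<Sum>\<mu>\<in>PiE {..<M} (\<lambda>_. {0, 1}). (\<Prod>(j, k)\<in>pairsM M. p k - p j) *
    exp (- (\<Sum>j<M. p j * (x + (p j)\<^sup>2 * t + c j))) *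
    exp ((\<Sum>j<M. \<mu> j * (2 * p j * (x + (p j)\<^sup>2 * t + ctilde M p c j)))
      + (\<Sum>(j, k)\<in>pairsM M. b_coef p j k * \<mu> j * \<mu> k)))"
    using vandermonde_pos
    by (intro sum.cong refl, subst ThetaA_sign_vector) (simp_all add: exp_add exp_diff exp_minus divide_inverse)
  also have "\<dots> = (\<Prod>(j, k)\<in>pairsM M. p k - p j) *
    exp (- (\<Sum>j<M. p j * (x + (p j)\<^sup>2 * t + c j))) * tauH M p (ctilde M p c) x t"
    by (simp add: tauH_def sum_distrib_left)
  finally show ?thesis .
qed

end

lemma tauH_pos: "0 < tauH M p ct x t"
  unfolding tauH_def by (rule sum_pos) (auto simp: PiE_eq_empty_iff intro: finite_PiE)

lemma tauH_differentiable: "(\<lambda>x. tauH M p ct x t) differentiable (at x)"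
  unfolding tauH_def real_differentiable_def by (rule exI, (rule derivative_intros)+)

lemma deriv_add_const: "deriv (\<lambda>y. g y + (a::real)) x = deriv g x"
  by (simp add: deriv_def has_real_derivative_iff_has_vector_derivative has_vector_derivative_add_const)

lemma uxx_mult_exp_affine:
  fixes F G :: "real \<Rightarrow> real \<Rightarrow> real"
  assumes F: "\<And>z. F z t = K * exp (a * z + b) * G z t"
    and K: "0 < K" and G_pos: "\<And>z. 0 < G z t"
    and G_diff: "\<And>z. (\<lambda>z. G z t) differentiable (at z)"
  shows "uxx F x t = uxx G x t"
proof -
  have ln_G: "((\<lambda>z. ln (G z t)) has_real_derivative deriv (\<lambda>z. ln (G z t)) y) (at y)" for y
  proof -
    have "((\<lambda>z. ln (G z t)) has_real_derivative 1 / G y t * deriv (\<lambda>z. G z t) y) (at y)"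
      by (rule DERIV_chain2[where g = "\<lambda>z. G z t", OF DERIV_ln_divide[OF G_pos]])
        (use G_diff DERIV_deriv_iff_real_differentiable in blast)
    with DERIV_imp_deriv show ?thesis by metis
  qed
  have ln_F: "(\<lambda>z. ln (F z t)) = (\<lambda>z. ln (G z t) + (a * z + b + ln K))"
  proof
    fix z
    show "ln (F z t) = ln (G z t) + (a * z + b + ln K)"
      using K G_pos[of z] by (simp add: F ln_mult)
  qed
  have "deriv (\<lambda>z. ln (F z t)) y = deriv (\<lambda>z. ln (G z t)) y + a" for y
  proof -
    have "((\<lambda>z. ln (G z t) + (a * z + b + ln K)) has_real_derivative
        deriv (\<lambda>z. ln (G z t)) y + a) (at y)"
      by (rule derivative_eq_intros ln_G refl)+ simp
    then show ?thesis
      unfolding ln_F by (rule DERIV_imp_deriv)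
  qed
  then show ?thesis
    by (simp add: uxx_def deriv_add_const)
qed

theorem proposition1:
  fixes M :: nat and p :: "nat \<Rightarrow> real"
  assumes "M \<ge> 1"
    and "0 < p 0"
    and "\<And>j k. j < k \<Longrightarrow> k < M \<Longrightarrow> p j < p k"
  shows "(\<forall>c x t. uxx (tau M p c) x t = uxx (tauH M p (ctilde M p c)) x t)
       \<and> {uxx (tau M p c) | c. True} = {uxx (tauH M p ct) | ct. True}"
proof -
  interpret soliton_speeds M p
  proof
    show "0 < p j" if "j < M" for j
      using assms(2) assms(3)[of 0 j] that by (cases "j = 0") auto
  qed (fact assms(3))
  have uxx_tau: "uxx (tau M p c) x t = uxx (tauH M p (ctilde M p c)) x t" for c x t
  proof (rule uxx_mult_exp_affine[OF _ vandermonde_pos tauH_pos tauH_differentiable])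
    fix z
    have "(\<Sum>j<M. p j * (z + (p j)\<^sup>2 * t + c j)) = (\<Sum>j<M. p j) * z + (\<Sum>j<M. p j * ((p j)\<^sup>2 * t + c j))"
      by (simp add: algebra_simps sum.distrib sum_distrib_left)
    then show "tau M p c z t = (\<Prod>(j, k)\<in>pairsM M. p k - p j) *
        exp (- (\<Sum>j<M. p j) * z + - (\<Sum>j<M. p j * ((p j)\<^sup>2 * t + c j))) * tauH M p (ctilde M p c) z t"
      by (simp add: tau_eq_scaled_tauH)
  qed
  then have uxx_tau_fun: "uxx (tau M p c) = uxx (tauH M p (ctilde M p c))" for c
    by (simp add: fun_eq_iff)
  have ctilde_onto: "ctilde M p (\<lambda>j. ct j - ctilde M p (\<lambda>_. 0) j) = ct" for ct
    by (simp add: ctilde_def fun_eq_iff)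
  have "{uxx (tau M p c) | c. True} = {uxx (tauH M p ct) | ct. True}"
    unfolding uxx_tau_fun by (auto, metis ctilde_onto)
  with uxx_tau show ?thesis by blast
qed

end
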